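(* For $(c,d)\in\mathbb{C}\times\mathbb{C}^*$ let $f_{c,d}(z) = 1 + \frac cz + \frac d{z^2}$ and identify $(c,d)$ with $[c:d:1]\in\mathbb{CP}^2$. For $n\ge 1$ let $\mathcal{X}_n$ be the set of $(c,d)\in\mathbb{C}\times\mathbb{C}^*$ such that $0$ is periodic under $f_{c,d}$ with period dividing $n$, and $\overline{\mathcal{X}_n}$ its closure in $\mathbb{CP}^2$. Let $n\ge 3$. If $[c:0:1]\in\overline{\mathcal{X}_n}$, then $c^{-1} = -4\cos^2(\pi p/q)$ for some integers $1\le p<q\le n$ with $\gcd(p,q)=1$ and $q\ne 2$. *)

theory Defs
  imports "HOL-Analysis.Analysis"
begin

text \<open>Points of the Riemann sphere: None is infinity, Some z is z.
  The extension of f(z) = 1 + c/z + d/z^2 to the sphere.\<close>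
definition fcd :: "complex \<Rightarrow> complex \<Rightarrow> complex option \<Rightarrow> complex option" where
  "fcd c d w = (case w of
      None \<Rightarrow> Some 1
    | Some z \<Rightarrow> (if z = 0 then (if c = 0 \<and> d = 0 then Some 1 else None)
                 else Some (1 + c / z + d / z ^ 2)))"

definition Xset :: "nat \<Rightarrow> (complex \<times> complex) set" where
  "Xset n = {(c, d). d \<noteq> 0 \<and> (fcd c d ^^ n) (Some 0) = Some 0}"

end

theory Submission imports Defs begin

text \<open>As \<open>d \<rightarrow> 0\<close> the map \<open>f\<^sub>c\<^sub>,\<^sub>d\<close> tends to the Moebius map \<open>z \<mapsto> 1 + c / z\<close>, and the orbit of
  0 under \<open>f\<^sub>c\<^sub>,\<^sub>d\<close> starts \<open>0, \<infinity>, 1\<close>. The orbit of 1 under the Moebius map is \<open>U\<^sub>j\<^sub>+\<^sub>1 / U\<^sub>j\<close>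
  for the Lucas sequence \<open>U\<^sub>j\<^sub>+\<^sub>2 = U\<^sub>j\<^sub>+\<^sub>1 + c U\<^sub>j\<close>. If no \<open>U\<^sub>j\<close> with \<open>1 \<le> j \<le> n\<close> vanished,
  the \<open>n\<close>-th orbit point would converge to \<open>U\<^sub>n / U\<^sub>n\<^sub>-\<^sub>1 \<noteq> 0\<close>, contradicting \<open>f\<^sup>n(0) = 0\<close> for
  parameters near \<open>(c, 0)\<close>. So \<open>U\<^sub>m = 0\<close> for some \<open>m \<le> n\<close>; by Binet's formula the ratio
  \<open>z\<close> of the roots of \<open>\<lambda>\<^sup>2 = \<lambda> + c\<close> is then an \<open>m\<close>-th root of unity other than \<open>\<plusminus>1\<close>, and
  \<open>1 / c = -(1 + z)\<^sup>2 / z = -4 cos\<^sup>2(\<pi> p / q)\<close>.\<close>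

fun lucas_U :: "'a::comm_ring_1 \<Rightarrow> 'a \<Rightarrow> nat \<Rightarrow> 'a" where
  "lucas_U P Q 0 = 0"
| "lucas_U P Q (Suc 0) = 1"
| "lucas_U P Q (Suc (Suc n)) = P * lucas_U P Q (Suc n) - Q * lucas_U P Q n"

lemma lucas_U_binet:
  fixes a b :: "'a::comm_ring_1"
  shows "lucas_U (a + b) (a * b) n * (a - b) = a ^ n - b ^ n"
proof (induction n rule: induct_nat_012)
  case (ge2 n)
  have "lucas_U (a + b) (a * b) (Suc (Suc n)) * (a - b)
      = (a + b) * (lucas_U (a + b) (a * b) (Suc n) * (a - b)) - a * b * (lucas_U (a + b) (a * b) n * (a - b))"
    by (simp add: algebra_simps)
  also have "\<dots> = (a + b) * (a ^ Suc n - b ^ Suc n) - a * b * (a ^ n - b ^ n)"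
    using ge2 by simp
  also have "\<dots> = a ^ Suc (Suc n) - b ^ Suc (Suc n)"
    by (simp add: algebra_simps)
  finally show ?case .
qed simp_all

lemma lucas_U_double_root:
  fixes a :: "'a::comm_ring_1"
  shows "lucas_U (2 * a) (a ^ 2) (Suc n) = of_nat (Suc n) * a ^ n"
proof (induction n rule: induct_nat_012)
  case (ge2 n)
  have "lucas_U (2 * a) (a ^ 2) (Suc (Suc (Suc n)))
      = 2 * a * lucas_U (2 * a) (a ^ 2) (Suc (Suc n)) - a ^ 2 * lucas_U (2 * a) (a ^ 2) (Suc n)"
    by simp
  also have "\<dots> = 2 * a * (of_nat (Suc (Suc n)) * a ^ Suc n) - a ^ 2 * (of_nat (Suc n) * a ^ n)"
    using ge2 by simp
  also have "\<dots> = of_nat (Suc (Suc (Suc n))) * a ^ Suc (Suc n)"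
    by (simp add: algebra_simps power2_eq_square)
  finally show ?case .
qed simp_all

lemma lucas_U_Q_0: "lucas_U P 0 (Suc n) = P ^ n"
  by (induction n rule: induct_nat_012) simp_all

lemma root_of_unity_eq_cis_coprime:
  fixes z :: complex
  assumes "m > 0" "z ^ m = 1" "z \<noteq> 1"
  obtains p q :: nat where "1 \<le> p" "p < q" "q \<le> m" "coprime p q" "z = cis (2 * pi * p / q)"
proof -
  have "z \<in> (\<lambda>k. cis (2 * pi * real k / real m)) ` {..<m}"
    using bij_betw_imp_surj_on[OF Complex.bij_betw_roots_unity[OF \<open>m > 0\<close>]] \<open>z ^ m = 1\<close> by blast
  then obtain k where k: "k < m" "z = cis (2 * pi * k / m)"
    by auto
  have "k \<noteq> 0"
  proof
    assume "k = 0"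
    then show False using k \<open>z \<noteq> 1\<close> by simp
  qed
  define g where "g = gcd k m"
  have "g > 0"
    using \<open>k \<noteq> 0\<close> by (simp add: g_def)
  have k_eq: "k = k div g * g" and m_eq: "m = m div g * g"
    by (simp_all add: g_def)
  show ?thesis
  proof
    show "k div g < m div g"
      using k(1) k_eq m_eq by (metis mult_less_cancel2)
    show "1 \<le> k div g"
      using \<open>k \<noteq> 0\<close> k_eq by (metis less_one mult_0 not_less)
    show "m div g \<le> m"
      by simp
    show "coprime (k div g) (m div g)"
      using \<open>k \<noteq> 0\<close> by (simp add: g_def div_gcd_coprime)
    show "z = cis (2 * pi * real (k div g) / real (m div g))"
      using k(2) k_eq m_eq \<open>g > 0\<close> by (metis mult_divide_mult_cancel_right of_nat_mult of_nat_0_less_iff times_divide_eq_right less_irrefl)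
  qed
qed

lemma one_plus_cis_squared_div_cis: "(1 + cis t)\<^sup>2 / cis t = of_real (4 * (cos (t / 2))\<^sup>2)"
proof -
  have "(1 + cis t)\<^sup>2 / cis t = 2 + (cis t + inverse (cis t))"
    by (simp add: field_simps power2_eq_square del: cis_inverse)
  also have "\<dots> = of_real (2 + 2 * cos t)"
    by (simp add: complex_eq_iff)
  also have "2 + 2 * cos t = 4 * (cos (t / 2))\<^sup>2"
    using cos_double_cos[of "t / 2"] by simp
  finally show ?thesis .
qed

lemma lucas_U_eq_0_imp_root_of_unity:
  fixes c :: complex
  assumes "lucas_U 1 (- c) m = 0" "m > 0"
  obtains z where "z ^ m = 1" "z \<noteq> 1" "1 + z \<noteq> 0" "c = - z / (1 + z)\<^sup>2"
proof -
  have "c \<noteq> 0"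
  proof
    assume "c = 0"
    then have "lucas_U 1 (- c) m = 1"
      using lucas_U_Q_0[of 1 "m - 1"] \<open>m > 0\<close> by simp
    with assms(1) show False by simp
  qed
  define s where "s = csqrt (1 + 4 * c)"
  define l1 where "l1 = (1 + s) / 2"
  define l2 where "l2 = (1 - s) / 2"
  have sum: "l1 + l2 = 1" and prod: "l1 * l2 = - c"
    by (simp_all add: l1_def l2_def s_def field_simps power2_eq_square[symmetric])
  then have U_m: "lucas_U (l1 + l2) (l1 * l2) m = 0"
    using assms(1) by simp
  have "l1 \<noteq> l2"
  proof
    assume "l1 = l2"
    then have "l1 = 1 / 2"
      using sum by (simp add: field_simps)
    moreover have "lucas_U (2 * l1) (l1\<^sup>2) m = 0"
      using U_m unfolding \<open>l1 = l2\<close> mult_2 power2_eq_square .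
    ultimately show False
      using lucas_U_double_root[of l1 "m - 1"] \<open>m > 0\<close> by simp
  qed
  have "l2 \<noteq> 0"
    using prod \<open>c \<noteq> 0\<close> by auto
  define z where "z = l1 / l2"
  have l2_z: "l2 * (1 + z) = 1"
    using sum \<open>l2 \<noteq> 0\<close> by (simp add: z_def algebra_simps)
  show ?thesis
  proof
    show "z ^ m = 1"
      using lucas_U_binet[of l1 l2 m] U_m \<open>l2 \<noteq> 0\<close> by (simp add: z_def power_divide)
    show "z \<noteq> 1"
      using \<open>l1 \<noteq> l2\<close> \<open>l2 \<noteq> 0\<close> by (simp add: z_def)
    show "1 + z \<noteq> 0"
      using l2_z by auto
    have "c = - z * l2\<^sup>2"
      using prod \<open>l2 \<noteq> 0\<close> by (simp add: z_def power2_eq_square)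
    also have "l2 = inverse (1 + z)"
      using l2_z by (simp add: inverse_unique mult.commute)
    finally show "c = - z / (1 + z)\<^sup>2"
      by (simp add: power_inverse divide_inverse)
  qed
qed

lemma lucas_U_eq_0_imp_inverse_eq_neg_cos_squared:
  fixes c :: complex
  assumes "lucas_U 1 (- c) m = 0" "m > 0"
  shows "\<exists>p q :: int. 1 \<le> p \<and> p < q \<and> q \<le> int m \<and> gcd p q = 1 \<and> q \<noteq> 2 \<and>
           c \<noteq> 0 \<and> inverse c = complex_of_real (- 4 * (cos (pi * real_of_int p / real_of_int q))\<^sup>2)"
proof -
  obtain z where "z ^ m = 1" "z \<noteq> 1" "1 + z \<noteq> 0" and c: "c = - z / (1 + z)\<^sup>2"
    using lucas_U_eq_0_imp_root_of_unity assms .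
  then obtain p q :: nat where pq: "1 \<le> p" "p < q" "q \<le> m" "coprime p q"
    and z: "z = cis (2 * pi * p / q)"
    using root_of_unity_eq_cis_coprime \<open>m > 0\<close> by blast
  have "q \<noteq> 2"
  proof
    assume "q = 2"
    moreover from this pq have "p = 1"
      by simp
    ultimately show False
      using \<open>1 + z \<noteq> 0\<close> by (simp add: z)
  qed
  have "c \<noteq> 0"
    using c \<open>1 + z \<noteq> 0\<close> by (simp add: z)
  have "inverse c = - ((1 + z)\<^sup>2 / z)"
    by (simp add: c)
  also have "\<dots> = complex_of_real (- 4 * (cos (pi * p / q))\<^sup>2)"
    unfolding z one_plus_cis_squared_div_cis by simp
  finally show ?thesis
    using pq \<open>q \<noteq> 2\<close> \<open>c \<noteq> 0\<close>
    by (intro exI[of _ "int p"] exI[of _ "int q"]) (simp add: gcd_int_def)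
qed

lemma fcd_orbit_tendsto_lucas_ratio:
  fixes cs ds :: "nat \<Rightarrow> complex"
  assumes cs: "cs \<longlonglongrightarrow> c" and ds: "ds \<longlonglongrightarrow> 0" and ds_nz: "\<forall>k. ds k \<noteq> 0"
    and U_nz: "\<forall>i\<in>{1..Suc j}. lucas_U 1 (- c) i \<noteq> 0"
  shows "\<exists>y. (\<forall>\<^sub>F k in sequentially. (fcd (cs k) (ds k) ^^ Suc (Suc j)) (Some 0) = Some (y k))
             \<and> y \<longlonglongrightarrow> lucas_U 1 (- c) (Suc (Suc j)) / lucas_U 1 (- c) (Suc j)"
  using U_nz
proof (induction j)
  case 0
  have "(fcd (cs k) (ds k) ^^ 2) (Some 0) = Some 1" for k
    using ds_nz by (simp add: fcd_def numeral_2_eq_2)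
  then show ?case
    by (intro exI[of _ "\<lambda>k. 1"]) (simp add: numeral_2_eq_2)
next
  case (Suc j)
  let ?U = "lucas_U 1 (- c)"
  define L where "L = ?U (Suc (Suc j)) / ?U (Suc j)"
  obtain y where y_orbit: "\<forall>\<^sub>F k in sequentially. (fcd (cs k) (ds k) ^^ Suc (Suc j)) (Some 0) = Some (y k)"
    and y_lim: "y \<longlonglongrightarrow> L"
    using Suc by (auto simp: L_def)
  have U_SS: "?U (Suc (Suc j)) \<noteq> 0" and U_S: "?U (Suc j) \<noteq> 0"
    using Suc.prems[rule_format, of "Suc (Suc j)"] Suc.prems[rule_format, of "Suc j"]
    by (simp_all del: lucas_U.simps)
  then have "L \<noteq> 0"
    by (simp add: L_def)
  then have "\<forall>\<^sub>F k in sequentially. y k \<noteq> 0"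
    using y_lim tendsto_imp_eventually_ne by blast
  with y_orbit have "\<forall>\<^sub>F k in sequentially.
      (fcd (cs k) (ds k) ^^ Suc (Suc (Suc j))) (Some 0) = Some (1 + cs k / y k + ds k / (y k)\<^sup>2)"
    by eventually_elim (simp add: fcd_def)
  moreover have "(\<lambda>k. 1 + cs k / y k + ds k / (y k)\<^sup>2) \<longlonglongrightarrow> 1 + c / L + 0 / L\<^sup>2"
    using \<open>L \<noteq> 0\<close> by (intro tendsto_intros cs ds y_lim) auto
  moreover have "1 + c / L + 0 / L\<^sup>2 = ?U (Suc (Suc (Suc j))) / ?U (Suc (Suc j))"
    using U_SS U_S by (simp add: L_def field_simps)
  ultimately show ?case
    by auto
qed

lemma closure_Xset_imp_lucas_U_eq_0:
  assumes "(c, 0) \<in> closure (Xset n)" "n \<ge> 2"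
  shows "\<exists>m\<in>{1..n}. lucas_U 1 (- c) m = 0"
proof (rule ccontr)
  assume U_nz: "\<not> ?thesis"
  obtain j where n: "n = Suc (Suc j)"
    using \<open>n \<ge> 2\<close> by (metis add_2_eq_Suc le_Suc_ex)
  obtain f where f_X: "\<forall>k. f k \<in> Xset n" and f_lim: "f \<longlonglongrightarrow> (c, 0)"
    using assms(1) unfolding closure_sequential by blast
  define cs where "cs k = fst (f k)" for k
  define ds where "ds k = snd (f k)" for k
  have cs: "cs \<longlonglongrightarrow> c" and ds: "ds \<longlonglongrightarrow> 0"
    using tendsto_fst[OF f_lim] tendsto_snd[OF f_lim] unfolding cs_def[abs_def] ds_def[abs_def] by simp_all
  have ds_nz: "\<forall>k. ds k \<noteq> 0" and periodic: "\<forall>k. (fcd (cs k) (ds k) ^^ n) (Some 0) = Some 0"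
    using f_X by (auto simp: Xset_def cs_def ds_def case_prod_beta)
  obtain y where y_orbit: "\<forall>\<^sub>F k in sequentially. (fcd (cs k) (ds k) ^^ n) (Some 0) = Some (y k)"
    and y_lim: "y \<longlonglongrightarrow> lucas_U 1 (- c) n / lucas_U 1 (- c) (Suc j)"
    using fcd_orbit_tendsto_lucas_ratio[OF cs ds ds_nz, of j] U_nz by (auto simp: n)
  have "\<forall>\<^sub>F k in sequentially. y k = 0"
    using y_orbit by eventually_elim (use periodic in auto)
  then have "y \<longlonglongrightarrow> 0"
    by (rule tendsto_eventually)
  with y_lim have "lucas_U 1 (- c) n / lucas_U 1 (- c) (Suc j) = 0"
    using LIMSEQ_unique by blast
  then show False
    using U_nz n by (auto simp del: lucas_U.simps)
qed

theorem lemma2p3: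
  fixes n :: nat and c :: complex
  assumes "n \<ge> 3"
    and "(c, 0) \<in> closure (Xset n)"
  shows "\<exists>p q :: int. 1 \<le> p \<and> p < q \<and> q \<le> int n \<and> gcd p q = 1 \<and> q \<noteq> 2 \<and>
           c \<noteq> 0 \<and> inverse c = complex_of_real (- 4 * (cos (pi * real_of_int p / real_of_int q))^2)"
proof -
  obtain m where m: "m \<in> {1..n}" "lucas_U 1 (- c) m = 0"
    using closure_Xset_imp_lucas_U_eq_0 assms by fastforce
  then obtain p q :: int where "1 \<le> p \<and> p < q \<and> q \<le> int m \<and> gcd p q = 1 \<and> q \<noteq> 2 \<and>
      c \<noteq> 0 \<and> inverse c = complex_of_real (- 4 * (cos (pi * real_of_int p / real_of_int q))^2)"
    using lucas_U_eq_0_imp_inverse_eq_neg_cos_squared by fastforce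
  with m(1) show ?thesis
    by (intro exI[of _ p] exI[of _ q]) auto
qed

end
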